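(* Let $C$ be a finite cyclic group of even order. Then there exist permutations $\alpha$ and $\beta$ of $C$ such that $c\,\alpha(c)=\beta(c)$ for all $c\in C$ with $c\neq1$, and moreover $\beta(1)=1$ and $\alpha(1)\neq1$. *)

theory Defs
  imports "HOL-Algebra.Elementary_Groups"
begin

end

theory Submission
  imports Defs "HOL-Algebra.Multiplicative_Group"
begin

text \<open>
  A cyclic group of order \<open>n\<close> is isomorphic to \<open>\<int>/n\<close>, and the required pair of
  permutations is invariant under isomorphism, so it suffices to treat \<open>\<int>/2m\<close>.
  There take \<open>\<alpha>\<close> to be the cycle \<open>(0 m m+1 \<dots> 2m-1)\<close>, fixing \<open>1, \<dots>, m-1\<close>.
  Then \<open>c + \<alpha>(c)\<close> is \<open>2c\<close> on the lower half \<open>1 \<le> c < m\<close> and \<open>2c + 1 - 2m\<close> on the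
  upper half \<open>m \<le> c < 2m\<close>, so \<open>\<beta>\<close> sends the lower half onto the nonzero even residues,
  the upper half onto the odd residues, and \<open>0\<close> to \<open>0\<close>.
\<close>

definition cycle_upper_half :: "int \<Rightarrow> int \<Rightarrow> int"
  where "cycle_upper_half m i = (if i = 0 then m else if i < m then i else (i + 1) mod (2 * m))"

definition interleave_halves :: "int \<Rightarrow> int \<Rightarrow> int"
  where "interleave_halves m i = (if i < m then 2 * i else 2 * i + 1 - 2 * m)"

lemma bij_betw_cycle_upper_half:
  assumes "m > 0"
  shows "bij_betw (cycle_upper_half m) {0..<2 * m} {0..<2 * m}"
proof -
  have "inj_on (cycle_upper_half m) {0..<2 * m}"
    using assms unfolding cycle_upper_half_def
    by (rule_tac inj_onI) (auto simp: mod_pos_pos_trivial split: if_splits;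
        smt (verit) mod_pos_pos_trivial mod_self)
  moreover have "cycle_upper_half m ` {0..<2 * m} \<subseteq> {0..<2 * m}"
    using assms by (auto simp: cycle_upper_half_def)
  ultimately show ?thesis
    using endo_inj_surj[OF finite_atLeastLessThan_int] unfolding bij_betw_def by blast
qed

lemma bij_betw_interleave_halves: "bij_betw (interleave_halves m) {0..<2 * m} {0..<2 * m}"
proof -
  have "inj_on (interleave_halves m) {0..<2 * m}"
    unfolding interleave_halves_def by (rule inj_onI) (auto split: if_splits; presburger)
  moreover have "interleave_halves m ` {0..<2 * m} \<subseteq> {0..<2 * m}"
    by (auto simp: interleave_halves_def)
  ultimately show ?thesis
    using endo_inj_surj[OF finite_atLeastLessThan_int] unfolding bij_betw_def by blast
qed

lemma add_cycle_upper_half_mod: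
  assumes "m > 0" and "0 < c" and "c < 2 * m"
  shows "(c + cycle_upper_half m c) mod (2 * m) = interleave_halves m c"
proof (cases "c < m")
  case True
  then show ?thesis using assms by (simp add: cycle_upper_half_def interleave_halves_def)
next
  case False
  then consider "c = 2 * m - 1" | "c + 1 < 2 * m" using assms by fastforce
  then show ?thesis
  proof cases
    case 1
    then have "(c + 1) mod (2 * m) = 0" "2 * c + 1 - 2 * m = c" by simp_all
    then show ?thesis
      using assms False by (simp add: cycle_upper_half_def interleave_halves_def)
  next
    case 2
    have "(c + (c + 1)) mod (2 * m) = (2 * c + 1 - 2 * m + 2 * m) mod (2 * m)" by simp
    also have "\<dots> = (2 * c + 1 - 2 * m) mod (2 * m)" by (rule mod_add_self2)
    also have "\<dots> = 2 * c + 1 - 2 * m" using False 2 by (intro mod_pos_pos_trivial) auto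
    finally show ?thesis
      using assms False by (simp add: cycle_upper_half_def interleave_halves_def mod_add_right_eq)
  qed
qed

text \<open>With \<open>\<alpha> \<one> = \<one>\<close> instead, \<open>\<alpha>\<close> would be a complete mapping, which cyclic groups of even
  order do not admit (Hall--Paige).\<close>

definition near_complete_mapping :: "('a, 'b) monoid_scheme \<Rightarrow> ('a \<Rightarrow> 'a) \<Rightarrow> ('a \<Rightarrow> 'a) \<Rightarrow> bool"
  where "near_complete_mapping G \<alpha> \<beta> \<longleftrightarrow>
    bij_betw \<alpha> (carrier G) (carrier G) \<and> bij_betw \<beta> (carrier G) (carrier G)
    \<and> (\<forall>c \<in> carrier G. c \<noteq> \<one>\<^bsub>G\<^esub> \<longrightarrow> c \<otimes>\<^bsub>G\<^esub> \<alpha> c = \<beta> c)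
    \<and> \<beta> \<one>\<^bsub>G\<^esub> = \<one>\<^bsub>G\<^esub> \<and> \<alpha> \<one>\<^bsub>G\<^esub> \<noteq> \<one>\<^bsub>G\<^esub>"

lemma near_complete_mapping_integer_mod_group:
  assumes "even n" and "n > 0"
  shows "near_complete_mapping (integer_mod_group n)
           (cycle_upper_half (int n div 2)) (interleave_halves (int n div 2))"
proof -
  define m where "m = int n div 2"
  have n: "int n = 2 * m" and "m > 0"
    using assms unfolding m_def by (auto elim: evenE)
  have carrier: "carrier (integer_mod_group n) = {0..<2 * m}"
    using assms n by (simp add: carrier_integer_mod_group)
  show ?thesis
    using bij_betw_cycle_upper_half[OF \<open>m > 0\<close>] bij_betw_interleave_halves[of m]
      add_cycle_upper_half_mod[OF \<open>m > 0\<close>] \<open>m > 0\<close>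
    unfolding near_complete_mapping_def carrier m_def[symmetric]
    by (auto simp: n cycle_upper_half_def interleave_halves_def)
qed

lemma (in group) int_pow_iso_integer_mod_group_ord:
  assumes g: "g \<in> carrier G" and "ord g \<noteq> 0"
  shows "(\<lambda>k::int. g [^] k) \<in> iso (integer_mod_group (ord g)) (subgroup_generated G {g})"
proof -
  let ?n = "int (ord g)"
  have carrier_Zn: "carrier (integer_mod_group (ord g)) = {0..<?n}"
    using assms by (simp add: carrier_integer_mod_group)
  have pow_mod: "g [^] (k mod ?n) = g [^] k" for k :: int
    using g by (simp add: int_pow_eq mod_eq_dvd_iff[symmetric])
  have "(\<lambda>k. g [^] k) \<in> hom (integer_mod_group (ord g)) (subgroup_generated G {g})"
    using g by (intro homI) (simp_all add: carrier_subgroup_generated_by_singleton pow_mod int_pow_mult)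
  moreover have "inj_on (\<lambda>k. g [^] k) {0..<?n}"
  proof (rule inj_onI)
    fix x y assume "x \<in> {0..<?n}" "y \<in> {0..<?n}" "g [^] x = g [^] y"
    then show "x = y"
      using g by (simp add: int_pow_eq) (metis mod_pos_pos_trivial mod_eq_dvd_iff atLeastLessThan_iff)
  qed
  moreover have "(\<lambda>k. g [^] k) ` {0..<?n} = range (\<lambda>k::int. g [^] k)"
  proof -
    have "g [^] k \<in> (\<lambda>k. g [^] k) ` {0..<?n}" for k :: int
      using assms pow_mod[of k, symmetric] by (intro image_eqI) auto
    then show ?thesis by auto
  qed
  ultimately show ?thesis
    using g by (simp add: iso_iff carrier_Zn carrier_subgroup_generated_by_singleton)
qed

lemma (in group) cyclic_group_iso_integer_mod_group:
  assumes "cyclic_group G" and "finite (carrier G)"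
  shows "integer_mod_group (order G) \<cong> G"
proof -
  obtain g where g: "g \<in> carrier G" and gen: "subgroup_generated G {g} = G"
    using assms(1) unfolding cyclic_group_def by blast
  have "ord g = order G"
    using cyclic_order_is_ord[OF g] gen by simp
  moreover have "ord g \<noteq> 0"
    using ord_ge_1[OF assms(2) g] by simp
  ultimately show ?thesis
    using int_pow_iso_integer_mod_group_ord[OF g] gen unfolding is_iso_def by force
qed

lemma near_complete_mapping_iso:
  assumes "group H" "group G" and h: "h \<in> iso H G" and "near_complete_mapping H \<alpha> \<beta>"
  defines "h' \<equiv> inv_into (carrier H) h"
  shows "near_complete_mapping G (h \<circ> \<alpha> \<circ> h') (h \<circ> \<beta> \<circ> h')"
proof -
  interpret group_hom H G h
    using assms(1,2) h by (simp add: group_hom_def group_hom_axioms_def iso_imp_homomorphism)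
  from assms(4) have bij_\<alpha>: "bij_betw \<alpha> (carrier H) (carrier H)"
    and bij_\<beta>: "bij_betw \<beta> (carrier H) (carrier H)"
    and mult_\<alpha>: "\<And>x. x \<in> carrier H \<Longrightarrow> x \<noteq> \<one>\<^bsub>H\<^esub> \<Longrightarrow> x \<otimes>\<^bsub>H\<^esub> \<alpha> x = \<beta> x"
    and "\<beta> \<one>\<^bsub>H\<^esub> = \<one>\<^bsub>H\<^esub>" and "\<alpha> \<one>\<^bsub>H\<^esub> \<noteq> \<one>\<^bsub>H\<^esub>"
    unfolding near_complete_mapping_def by auto
  have bij_h: "bij_betw h (carrier H) (carrier G)" and bij_h': "bij_betw h' (carrier G) (carrier H)"
    using h unfolding h'_def by (auto simp: iso_def bij_betw_inv_into)
  have h_h': "h (h' c) = c" if "c \<in> carrier G" for c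
    using bij_h that unfolding h'_def by (simp add: bij_betw_inv_into_right)
  have h'_one: "h' \<one>\<^bsub>G\<^esub> = \<one>\<^bsub>H\<^esub>"
    using bij_betw_inv_into_left[OF bij_h monoid.one_closed[OF group.is_monoid[OF assms(1)]]]
    unfolding h'_def by simp
  have "bij_betw (h \<circ> \<phi> \<circ> h') (carrier G) (carrier G)"
    if "bij_betw \<phi> (carrier H) (carrier H)" for \<phi>
    using bij_betw_trans[OF bij_h' bij_betw_trans[OF that bij_h]] by (simp add: comp_assoc)
  moreover have "c \<otimes>\<^bsub>G\<^esub> (h \<circ> \<alpha> \<circ> h') c = (h \<circ> \<beta> \<circ> h') c"
    if "c \<in> carrier G" "c \<noteq> \<one>\<^bsub>G\<^esub>" for c
  proof -
    have x: "h' c \<in> carrier H" "h' c \<noteq> \<one>\<^bsub>H\<^esub>"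
      using that bij_betw_apply[OF bij_h'] h_h'[of c] by auto
    then have "\<alpha> (h' c) \<in> carrier H" using bij_betw_apply[OF bij_\<alpha>] by blast
    have "c \<otimes>\<^bsub>G\<^esub> h (\<alpha> (h' c)) = h (h' c) \<otimes>\<^bsub>G\<^esub> h (\<alpha> (h' c))"
      using h_h' that by simp
    also have "\<dots> = h (h' c \<otimes>\<^bsub>H\<^esub> \<alpha> (h' c))"
      using x \<open>\<alpha> (h' c) \<in> carrier H\<close> by simp
    also have "\<dots> = h (\<beta> (h' c))" using x mult_\<alpha> by simp
    finally show ?thesis by simp
  qed
  moreover have "h (\<alpha> \<one>\<^bsub>H\<^esub>) \<noteq> \<one>\<^bsub>G\<^esub>"
  proof -
    have "\<alpha> \<one>\<^bsub>H\<^esub> \<in> carrier H" using bij_betw_apply[OF bij_\<alpha>] by simp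
    moreover have "inj_on h (carrier H)" using bij_h by (simp add: bij_betw_def)
    ultimately show ?thesis using \<open>\<alpha> \<one>\<^bsub>H\<^esub> \<noteq> \<one>\<^bsub>H\<^esub>\<close> inj_on_one_iff by blast
  qed
  ultimately show ?thesis
    using bij_\<alpha> bij_\<beta> \<open>\<beta> \<one>\<^bsub>H\<^esub> = \<one>\<^bsub>H\<^esub>\<close> by (simp add: near_complete_mapping_def h'_one)
qed

theorem lemma4p6:
  fixes G :: "('a, 'b) monoid_scheme"
  assumes "group G" and "cyclic_group G" and "finite (carrier G)" and "even (order G)"
  shows "\<exists>\<alpha> \<beta>. bij_betw \<alpha> (carrier G) (carrier G) \<and> bij_betw \<beta> (carrier G) (carrier G)
     \<and> (\<forall>c \<in> carrier G. c \<noteq> \<one>\<^bsub>G\<^esub> \<longrightarrow> c \<otimes>\<^bsub>G\<^esub> \<alpha> c = \<beta> c)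
     \<and> \<beta> \<one>\<^bsub>G\<^esub> = \<one>\<^bsub>G\<^esub> \<and> \<alpha> \<one>\<^bsub>G\<^esub> \<noteq> \<one>\<^bsub>G\<^esub>"
proof -
  interpret group G by fact
  let ?Zn = "integer_mod_group (order G)"
  obtain h where h: "h \<in> iso ?Zn G"
    using cyclic_group_iso_integer_mod_group assms(2,3) unfolding is_iso_def by blast
  have "order G > 0"
    using assms(3) order_gt_0_iff_finite by blast
  then obtain \<alpha> \<beta> where "near_complete_mapping ?Zn \<alpha> \<beta>"
    using near_complete_mapping_integer_mod_group assms(4) by blast
  then have "\<exists>\<alpha> \<beta>. near_complete_mapping G \<alpha> \<beta>"
    using near_complete_mapping_iso[OF group_integer_mod_group assms(1) h] by blast
  then show ?thesis
    unfolding near_complete_mapping_def by blast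
qed

end
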